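(* A graph $G$ (without isolated vertices) is $2$-$\gamma_{\rm tg}$-critical if and only if $G$ is a complete graph $K_n$ with $n \ge 2$.
   Context: Total domination game on a graph without isolated vertices: Dominator and Staller alternately choose vertices, each chosen vertex must be adjacent to some vertex not yet totally dominated; the game ends when no legal move exists; Dominator minimizes, Staller maximizes the number of moves; $\gamma_{\rm tg}(G)$ is the number of moves in the Dominator-start game under optimal play. $G|v$ is $G$ with $v$ declared already totally dominated, with $\gamma_{\rm tg}(G|v)$ defined analogously. $G$ is $\gamma_{\rm tg}$-critical if $\gamma_{\rm tg}(G|v)<\gamma_{\rm tg}(G)$ for every vertex $v$, and $k$-$\gamma_{\rm tg}$-critical if moreover $\gamma_{\rm tg}(G)=k$. *)

theory Defs
  imports Main
begin

definition simple_graph :: "'a set \<Rightarrow> ('a \<Rightarrow> 'a \<Rightarrow> bool) \<Rightarrow> bool" where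
  "simple_graph V E \<longleftrightarrow> finite V \<and> (\<forall>x y. E x y \<longrightarrow> x \<in> V \<and> y \<in> V)
     \<and> (\<forall>x y. E x y \<longrightarrow> E y x) \<and> (\<forall>x. \<not> E x x)"

definition no_isolated :: "'a set \<Rightarrow> ('a \<Rightarrow> 'a \<Rightarrow> bool) \<Rightarrow> bool" where
  "no_isolated V E \<longleftrightarrow> (\<forall>v\<in>V. \<exists>u. E v u)"

definition nbhd :: "('a \<Rightarrow> 'a \<Rightarrow> bool) \<Rightarrow> 'a \<Rightarrow> 'a set" where
  "nbhd E u = {w. E u w}"

text \<open>Legal moves when D is the set of vertices already totally dominated: a vertex u
  whose open neighbourhood contains a vertex not yet totally dominated.\<close>
definition legal_moves :: "'a set \<Rightarrow> ('a \<Rightarrow> 'a \<Rightarrow> bool) \<Rightarrow> 'a set \<Rightarrow> 'a set" where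
  "legal_moves V E D = {u \<in> V. \<not> nbhd E u \<subseteq> D}"

text \<open>Optimal number of remaining moves, with a fuel parameter k bounding the recursion
  depth (each move strictly enlarges D \<subseteq> V, so fuel card V suffices).
  The boolean is True when Dominator (minimiser) is to move.\<close>
fun tg_val :: "'a set \<Rightarrow> ('a \<Rightarrow> 'a \<Rightarrow> bool) \<Rightarrow> nat \<Rightarrow> bool \<Rightarrow> 'a set \<Rightarrow> nat" where
  "tg_val V E 0 d D = 0"
| "tg_val V E (Suc k) d D =
     (if legal_moves V E D = {} then 0
      else if d then Min ((\<lambda>u. Suc (tg_val V E k False (D \<union> nbhd E u))) ` legal_moves V E D)
      else Max ((\<lambda>u. Suc (tg_val V E k True (D \<union> nbhd E u))) ` legal_moves V E D))"

definition gamma_tg :: "'a set \<Rightarrow> ('a \<Rightarrow> 'a \<Rightarrow> bool) \<Rightarrow> nat" where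
  "gamma_tg V E = tg_val V E (card V) True {}"

text \<open>gamma_tg(G|v): v is declared already totally dominated.\<close>
definition gamma_tg_pre :: "'a set \<Rightarrow> ('a \<Rightarrow> 'a \<Rightarrow> bool) \<Rightarrow> 'a \<Rightarrow> nat" where
  "gamma_tg_pre V E v = tg_val V E (card V) True {v}"

definition tg_critical :: "'a set \<Rightarrow> ('a \<Rightarrow> 'a \<Rightarrow> bool) \<Rightarrow> bool" where
  "tg_critical V E \<longleftrightarrow> (\<forall>v\<in>V. gamma_tg_pre V E v < gamma_tg V E)"

definition k_tg_critical :: "nat \<Rightarrow> 'a set \<Rightarrow> ('a \<Rightarrow> 'a \<Rightarrow> bool) \<Rightarrow> bool" where
  "k_tg_critical k V E \<longleftrightarrow> tg_critical V E \<and> gamma_tg V E = k"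

definition complete_graph :: "'a set \<Rightarrow> ('a \<Rightarrow> 'a \<Rightarrow> bool) \<Rightarrow> bool" where
  "complete_graph V E \<longleftrightarrow> (\<forall>x\<in>V. \<forall>y\<in>V. x \<noteq> y \<longrightarrow> E x y)"

end

theory Submission
  imports Defs
begin

text \<open>If \<open>G|x\<close> can be finished in one move by Dominator, the move must be some \<open>u\<close> with
  \<open>V \<subseteq> {x} \<union> N(u)\<close>; as \<open>u \<notin> N(u)\<close> this forces \<open>u = x\<close>, so \<open>x\<close> is adjacent to every other vertex.
  Conversely in \<open>K\<^sub>n\<close> (\<open>n \<ge> 2\<close>) any first move \<open>u\<close> dominates everything except \<open>u\<close>, and any second
  move finishes the game, so \<open>\<gamma>\<^sub>t\<^sub>g(K\<^sub>n) = 2\<close>, whereas in \<open>K\<^sub>n|x\<close> the single move \<open>x\<close> suffices.\<close>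

lemma nbhd_subset:
  assumes "simple_graph V E"
  shows "nbhd E u \<subseteq> V"
  using assms unfolding simple_graph_def nbhd_def by blast

lemma finite_legal_moves: "finite V \<Longrightarrow> finite (legal_moves V E D)"
  unfolding legal_moves_def by auto

lemma legal_moves_empty_iff:
  assumes "simple_graph V E" and "no_isolated V E"
  shows "legal_moves V E D = {} \<longleftrightarrow> V \<subseteq> D"
proof
  assume no_moves: "legal_moves V E D = {}"
  show "V \<subseteq> D"
  proof
    fix z assume "z \<in> V"
    then obtain z' where "E z z'" using assms(2) unfolding no_isolated_def by blast
    then have "z' \<in> V" and "z \<in> nbhd E z'"
      using assms(1) unfolding simple_graph_def nbhd_def by auto
    with no_moves show "z \<in> D" unfolding legal_moves_def by blast
  qed
next
  assume "V \<subseteq> D"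
  then show "legal_moves V E D = {}"
    using nbhd_subset[OF assms(1)] unfolding legal_moves_def by blast
qed

lemma card_ge_2_if_no_isolated:
  assumes "simple_graph V E" and "no_isolated V E" and "V \<noteq> {}"
  shows "card V \<ge> 2"
proof -
  obtain v where v: "v \<in> V" using assms(3) by blast
  then obtain w where w: "E v w" using assms(2) unfolding no_isolated_def by blast
  then have "w \<in> V" and "v \<noteq> w" using assms(1) unfolding simple_graph_def by auto
  moreover have "finite V" using assms(1) unfolding simple_graph_def by blast
  ultimately have "card {v, w} \<le> card V" using v by (intro card_mono) auto
  with \<open>v \<noteq> w\<close> show ?thesis by simp
qed

lemma tg_val_no_moves: "legal_moves V E D = {} \<Longrightarrow> tg_val V E k d D = 0"
  by (cases k) auto

lemma tg_val_Suc_eq_0_iff: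
  assumes "finite V"
  shows "tg_val V E (Suc k) d D = 0 \<longleftrightarrow> legal_moves V E D = {}"
proof
  assume "tg_val V E (Suc k) d D = 0"
  show "legal_moves V E D = {}"
  proof (rule ccontr)
    let ?f = "\<lambda>u. Suc (tg_val V E k (\<not> d) (D \<union> nbhd E u))"
    assume moves: "legal_moves V E D \<noteq> {}"
    have fin: "finite (?f ` legal_moves V E D)" using finite_legal_moves[OF assms] by blast
    have "tg_val V E (Suc k) d D \<in> ?f ` legal_moves V E D"
      using Min_in[OF fin] Max_in[OF fin] moves by (cases d) auto
    with \<open>tg_val V E (Suc k) d D = 0\<close> show False by auto
  qed
qed (rule tg_val_no_moves)

lemma tg_val_Dominator_le_Suc_iff:
  assumes "finite V" and "legal_moves V E D \<noteq> {}"
  shows "tg_val V E (Suc k) True D \<le> Suc m \<longleftrightarrow>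
           (\<exists>u\<in>legal_moves V E D. tg_val V E k False (D \<union> nbhd E u) \<le> m)"
  using assms finite_legal_moves[OF assms(1)] by (simp add: Min_le_iff)

lemma tg_val_Suc_if_constant:
  assumes "legal_moves V E D \<noteq> {}"
    and "\<And>u. u \<in> legal_moves V E D \<Longrightarrow> tg_val V E k (\<not> d) (D \<union> nbhd E u) = m"
  shows "tg_val V E (Suc k) d D = Suc m"
proof -
  have "(\<lambda>u. Suc (tg_val V E k (\<not> d) (D \<union> nbhd E u))) ` legal_moves V E D = {Suc m}"
    using assms by auto
  then show ?thesis using assms(1) by (cases d) auto
qed

lemma gamma_tg_pre_le_1_iff:
  assumes "simple_graph V E" and "no_isolated V E" and "card V \<ge> 2" and "x \<in> V"
  shows "gamma_tg_pre V E x \<le> 1 \<longleftrightarrow> (\<exists>u\<in>V. V \<subseteq> insert x (nbhd E u))"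
proof -
  have fin: "finite V" using assms(1) unfolding simple_graph_def by blast
  obtain k where k: "card V = Suc (Suc k)" using assms(3) by (metis add_2_eq_Suc le_Suc_ex)
  have "\<not> V \<subseteq> {x}" using assms(3) card_mono[of "{x}" V] by auto
  then obtain y where y: "y \<in> V" "y \<noteq> x" by blast
  then have moves: "legal_moves V E {x} \<noteq> {}"
    by (auto simp: legal_moves_empty_iff[OF assms(1,2)])
  have "gamma_tg_pre V E x \<le> 1 \<longleftrightarrow>
        (\<exists>u\<in>legal_moves V E {x}. tg_val V E (Suc k) False ({x} \<union> nbhd E u) \<le> 0)"
    unfolding gamma_tg_pre_def k One_nat_def
    using tg_val_Dominator_le_Suc_iff[OF fin moves] .
  also have "\<dots> \<longleftrightarrow> (\<exists>u\<in>legal_moves V E {x}. V \<subseteq> insert x (nbhd E u))"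
    using tg_val_Suc_eq_0_iff[OF fin] legal_moves_empty_iff[OF assms(1,2)]
    by (simp del: tg_val.simps)
  also have "\<dots> \<longleftrightarrow> (\<exists>u\<in>V. V \<subseteq> insert x (nbhd E u))"
    using y unfolding legal_moves_def by blast
  finally show ?thesis .
qed

lemma nbhd_complete_graph:
  assumes "simple_graph V E" and "complete_graph V E" and "u \<in> V"
  shows "nbhd E u = V - {u}"
  using assms unfolding simple_graph_def complete_graph_def nbhd_def by blast

lemma gamma_tg_complete_graph:
  assumes "simple_graph V E" and "no_isolated V E" and "complete_graph V E" and "card V \<ge> 2"
  shows "gamma_tg V E = 2"
proof -
  obtain k where k: "card V = Suc (Suc k)" using assms(4) by (metis add_2_eq_Suc le_Suc_ex)
  have no_moves_iff: "\<And>D. legal_moves V E D = {} \<longleftrightarrow> V \<subseteq> D"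
    using legal_moves_empty_iff[OF assms(1,2)] .
  have Vne: "V \<noteq> {}" using k by auto
  have first_move: "tg_val V E (Suc k) (\<not> True) ({} \<union> nbhd E u) = Suc 0"
    if u: "u \<in> legal_moves V E {}" for u
  proof (rule tg_val_Suc_if_constant)
    have "u \<in> V" using u unfolding legal_moves_def by blast
    then have Nu: "nbhd E u = V - {u}" using nbhd_complete_graph[OF assms(1,3)] by blast
    then show "legal_moves V E ({} \<union> nbhd E u) \<noteq> {}"
      using \<open>u \<in> V\<close> by (auto simp: no_moves_iff)
    fix w assume "w \<in> legal_moves V E ({} \<union> nbhd E u)"
    then have "w \<in> V" "w \<noteq> u"
      using Nu \<open>u \<in> V\<close> unfolding legal_moves_def by (auto simp: nbhd_def)
    then have "V \<subseteq> {} \<union> nbhd E u \<union> nbhd E w"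
      using Nu nbhd_complete_graph[OF assms(1,3)] \<open>u \<in> V\<close> by blast
    then show "tg_val V E k (\<not> (\<not> True)) ({} \<union> nbhd E u \<union> nbhd E w) = 0"
      by (intro tg_val_no_moves) (simp add: no_moves_iff)
  qed
  have "legal_moves V E {} \<noteq> {}" using no_moves_iff Vne by blast
  then show ?thesis
    unfolding gamma_tg_def k numeral_2_eq_2 using first_move by (rule tg_val_Suc_if_constant)
qed

theorem proposition4p1:
  fixes V :: "'a set" and E :: "'a \<Rightarrow> 'a \<Rightarrow> bool"
  assumes "simple_graph V E" and "no_isolated V E"
  shows "k_tg_critical 2 V E \<longleftrightarrow> (complete_graph V E \<and> card V \<ge> 2)"
proof
  assume "k_tg_critical 2 V E"
  then have "gamma_tg V E = 2" and pre: "\<And>x. x \<in> V \<Longrightarrow> gamma_tg_pre V E x \<le> 1"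
    unfolding k_tg_critical_def tg_critical_def by auto
  then have "V \<noteq> {}" unfolding gamma_tg_def by auto
  then have card: "card V \<ge> 2" using card_ge_2_if_no_isolated[OF assms] by blast
  have "E x y" if "x \<in> V" "y \<in> V" "x \<noteq> y" for x y
  proof -
    obtain u where "u \<in> V" and dom: "V \<subseteq> insert x (nbhd E u)"
      using pre gamma_tg_pre_le_1_iff[OF assms card] \<open>x \<in> V\<close> by blast
    have "\<not> E u u" using assms(1) unfolding simple_graph_def by blast
    then have "u = x" using dom \<open>u \<in> V\<close> unfolding nbhd_def by blast
    with dom that show "E x y" unfolding nbhd_def by blast
  qed
  with card show "complete_graph V E \<and> card V \<ge> 2" unfolding complete_graph_def by blast
next
  assume complete: "complete_graph V E \<and> card V \<ge> 2"
  have "gamma_tg_pre V E x \<le> 1" if "x \<in> V" for x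
    using gamma_tg_pre_le_1_iff[OF assms] nbhd_complete_graph[OF assms(1)] complete that
    by blast
  then show "k_tg_critical 2 V E"
    using gamma_tg_complete_graph[OF assms] complete
    unfolding k_tg_critical_def tg_critical_def by fastforce
qed

end
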